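(* Let $f,g$ satisfy (H1) and (H2) (see context). Let $(\gamma_n)_{n\ge1}$ be positive non-increasing stepsizes with $\gamma_n\in(0,1/L]$, $\theta_0\in\mathrm{Dom}(g)$, and let $\theta_{n+1}=\mathrm{Prox}_{\gamma_{n+1}}(\theta_n-\gamma_{n+1}H_{n+1})$ for some $H_{n+1}\in\Theta$, with $\eta_{n+1}=H_{n+1}-\nabla f(\theta_n)$. Let $\mathcal L=\mathrm{argmin}_\Theta F$. (i) For any $\theta_\star\in\mathcal L$ and any $n\ge m\ge0$, $$\|\theta_{n+1}-\theta_\star\|^2\le\|\theta_m-\theta_\star\|^2-2\sum_{k=m}^n\gamma_{k+1}\langle T_{\gamma_{k+1}}(\theta_k)-\theta_\star,\eta_{k+1}\rangle+2\sum_{k=m}^n\gamma_{k+1}^2\|\eta_{k+1}\|^2.$$ (ii) Assume that for any $\theta_\star\in\mathcal L$ the series $\sum_{n\ge0}\gamma_{n+1}\langle T_{\gamma_{n+1}}(\theta_n)-\theta_\star,\eta_{n+1}\rangle$ converges and $\sum_{n\ge0}\gamma_{n+1}^2\|\eta_{n+1}\|^2<\infty$. Then for any $\theta_\star\in\mathcal L$, $\lim_n\|\theta_n-\theta_\star\|$ exists. If in addition $\sum_n\gamma_n=+\infty$, there exists $\theta_\infty\in\mathcal L$ with $\lim_n\theta_n=\theta_\infty$.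
   Context: $\Theta$ is a finite-dimensional Euclidean space with inner product $\langle\cdot,\cdot\rangle$ and norm $\|\cdot\|$. (H1): $g:\Theta\to(-\infty,+\infty]$ convex, not identically $+\infty$, lower semicontinuous; $f:\Theta\to\mathbb R$ continuously differentiable with $L$-Lipschitz gradient. (H2): $f$ convex and $\mathrm{argmin}_\Theta F\neq\emptyset$, $F=f+g$. $\mathrm{Dom}(g)=\{\theta:|g(\theta)|<\infty\}$. $\mathrm{Prox}_\gamma(\theta)=\mathrm{argmin}_{\vartheta}\{g(\vartheta)+\frac1{2\gamma}\|\vartheta-\theta\|^2\}$, $T_\gamma(\theta)=\mathrm{Prox}_\gamma(\theta-\gamma\nabla f(\theta))$. *)

theory Defs
  imports "HOL-Analysis.Analysis"
begin

definition convex_ext :: "('a::real_vector \<Rightarrow> ereal) \<Rightarrow> bool" where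
  "convex_ext g \<longleftrightarrow> (\<forall>x y u. 0 \<le> u \<and> u \<le> 1 \<longrightarrow>
      g ((1 - u) *\<^sub>R x + u *\<^sub>R y) \<le> ereal (1 - u) * g x + ereal u * g y)"

definition lsc_ext :: "('a::topological_space \<Rightarrow> ereal) \<Rightarrow> bool" where
  "lsc_ext g \<longleftrightarrow> (\<forall>c::real. closed {x. g x \<le> ereal c})"

definition dom_ext :: "('a \<Rightarrow> ereal) \<Rightarrow> 'a set" where
  "dom_ext g = {x. \<bar>g x\<bar> < \<infinity>}"

definition prox_set :: "('a::real_normed_vector \<Rightarrow> ereal) \<Rightarrow> real \<Rightarrow> 'a \<Rightarrow> 'a set" where
  "prox_set g \<gamma> x = {v. \<forall>w. g v + ereal (norm (v - x) ^ 2 / (2 * \<gamma>))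
                             \<le> g w + ereal (norm (w - x) ^ 2 / (2 * \<gamma>))}"

text \<open>Prox operator (the argmin is a singleton under (H1)).\<close>
definition prox :: "('a::real_normed_vector \<Rightarrow> ereal) \<Rightarrow> real \<Rightarrow> 'a \<Rightarrow> 'a" where
  "prox g \<gamma> x = (THE v. v \<in> prox_set g \<gamma> x)"

definition Tmap :: "('a::real_normed_vector \<Rightarrow> ereal) \<Rightarrow> ('a \<Rightarrow> 'a) \<Rightarrow> real \<Rightarrow> 'a \<Rightarrow> 'a" where
  "Tmap g df \<gamma> x = prox g \<gamma> (x - \<gamma> *\<^sub>R df x)"

end

theory Submission
  imports Defs
begin

text \<open>
  One inexact forward-backward step is compared with the exact step \<open>T\<^sub>\<gamma>(\<theta>\<^sub>n)\<close>. The variational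
  inequality of the proximal map, the descent lemma (this is where \<open>\<gamma> \<le> 1/L\<close> enters) and the
  convexity of \<open>f\<close> give, for every minimizer \<open>\<theta>\<^sub>\<star>\<close>,
  \<open>\<parallel>\<theta>\<^sub>n\<^sub>+\<^sub>1 - \<theta>\<^sub>\<star>\<parallel>\<^sup>2 + 2\<gamma>\<^sub>n\<^sub>+\<^sub>1(F \<theta>\<^sub>n\<^sub>+\<^sub>1 - min F) \<le> \<parallel>\<theta>\<^sub>n - \<theta>\<^sub>\<star>\<parallel>\<^sup>2 - 2\<gamma>\<^sub>n\<^sub>+\<^sub>1\<langle>T\<^sub>\<gamma>(\<theta>\<^sub>n) - \<theta>\<^sub>\<star>, \<eta>\<^sub>n\<^sub>+\<^sub>1\<rangle> + 2\<gamma>\<^sub>n\<^sub>+\<^sub>1\<^sup>2\<parallel>\<eta>\<^sub>n\<^sub>+\<^sub>1\<parallel>\<^sup>2\<close>,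
  the last term paying for the replacement of the inexact step by the exact one, which are at
  distance at most \<open>\<gamma>\<parallel>\<eta>\<parallel>\<close> because the proximal map is nonexpansive. Summing gives (i).
  Under the summability hypotheses the squared distances differ from a nonincreasing sequence by a
  convergent one, so they converge, and \<open>\<Sum> \<gamma>\<^sub>n\<^sub>+\<^sub>1(F \<theta>\<^sub>n\<^sub>+\<^sub>1 - min F) < \<infinity>\<close>. If moreover \<open>\<Sum> \<gamma>\<^sub>n = \<infinity>\<close>,
  then \<open>F \<theta>\<^sub>n \<rightarrow> min F\<close> along a subsequence; by lower semicontinuity a cluster point of it is a
  minimizer, and the distance to that minimizer, which converges, tends to \<open>0\<close> along the
  subsequence, so the whole sequence converges to it.
\<close>

section \<open>Smooth convex functions\<close>

lemma has_real_derivative_along_line: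
  fixes f :: "'a::real_inner \<Rightarrow> real"
  assumes "\<And>x. (f has_derivative (\<lambda>h. df x \<bullet> h)) (at x)"
  shows "((\<lambda>t. f (x + t *\<^sub>R d)) has_real_derivative (df (x + t *\<^sub>R d) \<bullet> d)) (at t within S)"
proof -
  have "((\<lambda>t. x + t *\<^sub>R d) has_derivative (\<lambda>h. h *\<^sub>R d)) (at t within S)"
    by (auto intro!: derivative_eq_intros)
  from has_derivative_compose[OF this assms]
  show ?thesis
    by (simp add: has_field_derivative_def mult.commute[of _ "df (x + t *\<^sub>R d) \<bullet> d"])
qed

lemma convex_on_gradient_inequality:
  fixes f :: "'a::real_inner \<Rightarrow> real"
  assumes "\<And>x. (f has_derivative (\<lambda>h. df x \<bullet> h)) (at x)" and "convex_on UNIV f"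
  shows "f x + df x \<bullet> (y - x) \<le> f y"
proof -
  define \<phi> where "\<phi> t = f (x + t *\<^sub>R (y - x))" for t
  have "convex_on UNIV \<phi>"
  proof (rule convex_onI)
    fix t a b :: real assume "0 < t" "t < 1"
    have "\<phi> ((1 - t) *\<^sub>R a + t *\<^sub>R b)
        = f ((1 - t) *\<^sub>R (x + a *\<^sub>R (y - x)) + t *\<^sub>R (x + b *\<^sub>R (y - x)))"
      unfolding \<phi>_def by (simp add: algebra_simps)
    also have "\<dots> \<le> (1 - t) * \<phi> a + t * \<phi> b"
      unfolding \<phi>_def using convex_onD[OF assms(2)] \<open>0 < t\<close> \<open>t < 1\<close> by simp
    finally show "\<phi> ((1 - t) *\<^sub>R a + t *\<^sub>R b) \<le> (1 - t) * \<phi> a + t * \<phi> b" .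
  qed simp
  moreover have "(\<phi> has_real_derivative (df x \<bullet> (y - x))) (at 0 within UNIV)"
    unfolding \<phi>_def using has_real_derivative_along_line[OF assms(1), of x "y - x" 0] by simp
  ultimately have "\<phi> 1 - \<phi> 0 \<ge> (df x \<bullet> (y - x)) * (1 - 0)"
    by (intro convex_on_imp_above_tangent) auto
  then show ?thesis unfolding \<phi>_def by simp
qed

lemma descent_lemma:
  fixes f :: "'a::real_inner \<Rightarrow> real"
  assumes grad: "\<And>x. (f has_derivative (\<lambda>h. df x \<bullet> h)) (at x)"
    and lip: "\<And>x y. norm (df x - df y) \<le> L * norm (x - y)"
  shows "f y \<le> f x + df x \<bullet> (y - x) + L / 2 * norm (y - x) ^ 2"
proof -
  define d where "d = y - x"
  define \<phi> where "\<phi> t = f (x + t *\<^sub>R d) - t * (df x \<bullet> d) - L / 2 * t\<^sup>2 * norm d ^ 2" for t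
  have "\<phi> 1 \<le> \<phi> 0"
  proof (rule DERIV_nonpos_imp_nonincreasing[of 0 1 \<phi>])
    fix t :: real assume t: "0 \<le> t" "t \<le> 1"
    have D: "(\<phi> has_real_derivative (df (x + t *\<^sub>R d) \<bullet> d - df x \<bullet> d - L * t * norm d ^ 2)) (at t)"
      unfolding \<phi>_def
      by (rule derivative_eq_intros has_real_derivative_along_line[OF grad] | simp)+
    have "df (x + t *\<^sub>R d) \<bullet> d - df x \<bullet> d = (df (x + t *\<^sub>R d) - df x) \<bullet> d"
      by (simp add: inner_diff_left)
    also have "\<dots> \<le> norm (df (x + t *\<^sub>R d) - df x) * norm d"
      by (rule norm_cauchy_schwarz)
    also have "\<dots> \<le> L * norm (t *\<^sub>R d) * norm d"
      using lip[of "x + t *\<^sub>R d" x] by (intro mult_right_mono) auto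
    also have "\<dots> = L * t * norm d ^ 2" using t by (simp add: power2_eq_square)
    finally show "\<exists>z. (\<phi> has_real_derivative z) (at t) \<and> z \<le> 0" using D by force
  qed simp
  then show ?thesis unfolding \<phi>_def d_def by simp
qed

section \<open>Lower semicontinuous extended-real functions\<close>

lemma lsc_ext_limit_le:
  fixes g :: "'a::topological_space \<Rightarrow> ereal"
  assumes "lsc_ext g" and "u \<longlonglongrightarrow> l" and "eventually (\<lambda>n. g (u n) \<le> ereal c) sequentially"
  shows "g l \<le> ereal c"
proof -
  have "closed {x. g x \<le> ereal c}" using assms(1) unfolding lsc_ext_def by blast
  from Lim_in_closed_set[OF this _ _ assms(2)] assms(3) show ?thesis by simp
qed

lemma lsc_ext_tendsto_le:
  fixes g :: "'a::topological_space \<Rightarrow> ereal"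
  assumes "lsc_ext g" and "u \<longlonglongrightarrow> l" and "r \<longlonglongrightarrow> c" and "\<And>n. g (u n) \<le> ereal (r n)"
  shows "g l \<le> ereal c"
proof (rule ereal_le_epsilon2)
  fix e :: real assume "0 < e"
  with assms(3) have "eventually (\<lambda>n. r n < c + e) sequentially"
    by (intro order_tendstoD) auto
  then have "eventually (\<lambda>n. g (u n) \<le> ereal (c + e)) sequentially"
    by eventually_elim (use assms(4) in \<open>fastforce intro: order.trans\<close>)
  from lsc_ext_limit_le[OF assms(1,2) this] show "g l \<le> ereal c + ereal e" by simp
qed

lemma lsc_ext_bounded_below_on_compact:
  fixes g :: "'a::first_countable_topology \<Rightarrow> ereal"
  assumes "\<And>x. g x \<noteq> -\<infinity>" and "lsc_ext g" and "compact K"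
  shows "\<exists>m. \<forall>v\<in>K. ereal m \<le> g v"
proof (rule ccontr)
  assume "\<not> ?thesis"
  then have "\<forall>n::nat. \<exists>v. v \<in> K \<and> g v < ereal (- real n)"
    by (metis linorder_not_le)
  then obtain v where v: "\<And>n. v n \<in> K" "\<And>n. g (v n) < ereal (- real n)"
    by metis
  obtain l r where "strict_mono r" and lim: "(v \<circ> r) \<longlonglongrightarrow> l"
    using compact_imp_seq_compact[OF assms(3)] v(1) unfolding seq_compact_def by metis
  have "g l \<le> ereal c" for c
  proof (rule lsc_ext_limit_le[OF assms(2) lim])
    show "eventually (\<lambda>j. g ((v \<circ> r) j) \<le> ereal c) sequentially"
    proof (rule eventually_sequentiallyI)
      fix j assume "nat \<lceil>- c\<rceil> \<le> j"
      moreover have "j \<le> r j" using \<open>strict_mono r\<close> by (rule seq_suble)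
      ultimately have "- real (r j) \<le> c" by linarith
      then show "g ((v \<circ> r) j) \<le> ereal c"
        using v(2)[of "r j"] by (auto intro: order.trans[OF less_imp_le])
    qed
  qed
  then have "g l = -\<infinity>" by (rule ereal_bot)
  with assms(1) show False by simp
qed

lemma norm_midpoint_diff_sq:
  fixes u v x :: "'a::real_inner"
  shows "norm ((1/2) *\<^sub>R (u + v) - x) ^ 2
       = (norm (u - x) ^ 2 + norm (v - x) ^ 2) / 2 - norm (u - v) ^ 2 / 4"
proof -
  have "(1/2) *\<^sub>R x + (1/2) *\<^sub>R x = x"
    by (metis scaleR_add_left field_sum_of_halves scaleR_one)
  then have "(1/2) *\<^sub>R (u + v) - x = (1/2) *\<^sub>R ((u - x) + (v - x))"
    by (simp add: algebra_simps)
  moreover have "u - v = (u - x) - (v - x)" by simp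
  ultimately show ?thesis
    by (simp add: power2_norm_eq_inner inner_add_left inner_add_right inner_diff_left
        inner_diff_right inner_commute field_simps)
qed

lemma norm_add_scaleR_sq:
  fixes p r :: "'a::real_inner"
  shows "norm (p + t *\<^sub>R r) ^ 2 = norm p ^ 2 + 2 * t * (p \<bullet> r) + t\<^sup>2 * norm r ^ 2"
proof -
  have "norm (p + t *\<^sub>R r) ^ 2 = norm p ^ 2 + norm (t *\<^sub>R r) ^ 2 + 2 * (p \<bullet> t *\<^sub>R r)"
    using dot_norm[of p "t *\<^sub>R r"] by simp
  then show ?thesis by (simp add: power_mult_distrib)
qed

lemma Cauchy_of_norm_diff_sq_le:
  fixes u :: "nat \<Rightarrow> 'a::real_normed_vector"
  assumes "\<And>i j. norm (u i - u j) ^ 2 \<le> \<epsilon> i + \<epsilon> j" and "\<epsilon> \<longlonglongrightarrow> 0"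
  shows "Cauchy u"
proof (rule CauchyI)
  fix e :: real assume "0 < e"
  then have "eventually (\<lambda>n. \<epsilon> n < e\<^sup>2 / 2) sequentially"
    using assms(2) by (intro order_tendstoD) auto
  then obtain N where N: "\<And>n. N \<le> n \<Longrightarrow> \<epsilon> n < e\<^sup>2 / 2"
    unfolding eventually_sequentially by blast
  show "\<exists>N. \<forall>i\<ge>N. \<forall>j\<ge>N. norm (u i - u j) < e"
  proof (intro exI allI impI)
    fix i j assume "N \<le> i" "N \<le> j"
    then have "norm (u i - u j) ^ 2 < e\<^sup>2" using N[of i] N[of j] assms(1)[of i j] by linarith
    with \<open>0 < e\<close> show "norm (u i - u j) < e" by (simp add: power_less_imp_less_base)
  qed
qed

lemma telescope_le:
  fixes a b :: "nat \<Rightarrow> real"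
  assumes "\<And>k. a (Suc k) \<le> a k + b k" and "m \<le> n"
  shows "a (Suc n) \<le> a m + (\<Sum>k=m..n. b k)"
  using assms(2)
proof (induction n rule: dec_induct)
  case base
  show ?case using assms(1)[of m] by simp
next
  case (step n)
  with assms(1)[of "Suc n"] show ?case by simp
qed

lemma perturbed_descent_convergent:
  fixes a d e :: "nat \<Rightarrow> real"
  assumes step: "\<And>k. a (Suc k) + d k \<le> a k + e k"
    and d_nonneg: "\<And>k. 0 \<le> d k" and a_nonneg: "\<And>k. 0 \<le> a k" and "summable e"
  shows "convergent a" and "summable d"
proof -
  define b where "b n = a n - (\<Sum>k<n. e k)" for n
  have e_conv: "convergent (\<lambda>n. \<Sum>k<n. e k)"
    using summable_LIMSEQ[OF assms(4)] by (auto simp: convergent_def)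
  obtain K where K: "\<And>n. \<bar>\<Sum>k<n. e k\<bar> \<le> K"
    using convergent_imp_Bseq[OF e_conv] by (auto simp: Bseq_def)
  have b_step: "b (Suc n) + d n \<le> b n" for n
    using step[of n] by (simp add: b_def)
  have b_lower: "- K \<le> b n" for n
    using a_nonneg[of n] K[of n] by (simp add: b_def abs_le_iff)
  have "b (Suc n) \<le> b n" for n using b_step[of n] d_nonneg[of n] by linarith
  then have "decseq b" by (rule decseq_SucI)
  then have "b n \<le> b 0" for n by (simp add: decseq_def)
  with b_lower have "Bseq b" by (intro BseqI'[of _ "max \<bar>b 0\<bar> K"]) (smt (verit) real_norm_def)
  with \<open>decseq b\<close> have "convergent b" by (blast intro: Bseq_monoseq_convergent decseq_imp_monoseq)
  from convergent_add[OF this e_conv] show "convergent a" by (simp add: b_def)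
  have "(\<Sum>k<n. d k) \<le> b 0 - b n" for n
  proof (induction n)
    case (Suc n)
    then show ?case using b_step[of n] by simp
  qed simp
  with b_lower show "summable d"
    by (intro summableI_nonneg_bounded[where x = "b 0 + K"] d_nonneg) (smt (verit))
qed

lemma frequently_small_of_summable_weighted:
  fixes w e :: "nat \<Rightarrow> real"
  assumes "summable (\<lambda>n. w n * e n)" and "\<not> summable w" and "\<And>n. 0 \<le> w n" and "0 < \<epsilon>"
  shows "\<exists>n\<ge>N. e n < \<epsilon>"
proof (rule ccontr)
  assume "\<not> ?thesis"
  then have "w n * \<epsilon> \<le> w n * e n" if "N \<le> n" for n
    using that assms(3) by (simp add: mult_left_mono not_less)
  then have "norm (w n) \<le> w n * e n / \<epsilon>" if "N \<le> n" for n
    using that assms(3,4) by (simp add: pos_le_divide_eq)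
  then have "summable w"
    using summable_comparison_test'[OF summable_divide[OF assms(1), of \<epsilon>]] by blast
  with assms(2) show False by blast
qed

lemma bounded_range_of_convergent_norm_diff:
  fixes x :: "nat \<Rightarrow> 'a::real_normed_vector"
  assumes "convergent (\<lambda>n. norm (x n - a))"
  shows "bounded (range x)"
proof -
  obtain K where "\<And>n. norm (x n - a) \<le> K"
    using convergent_imp_Bseq[OF assms] by (auto simp: Bseq_def)
  then have "norm (x n) \<le> K + norm a" for n
    using norm_triangle_ineq[of "x n - a" a] by (smt (verit) diff_add_cancel)
  then show ?thesis by (auto simp: bounded_iff)
qed

lemma tendsto_of_convergent_norm_diff_subseq:
  fixes x :: "nat \<Rightarrow> 'a::real_normed_vector"
  assumes "convergent (\<lambda>n. norm (x n - l))" and "\<And>j. j \<le> \<sigma> j" and "(\<lambda>j. x (\<sigma> j)) \<longlonglongrightarrow> l"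
  shows "x \<longlonglongrightarrow> l"
proof -
  obtain c where c: "(\<lambda>n. norm (x n - l)) \<longlonglongrightarrow> c" using assms(1) by (auto simp: convergent_def)
  have "filterlim \<sigma> sequentially sequentially"
    using assms(2) by (intro filterlim_at_top_mono[OF filterlim_ident]) auto
  from filterlim_compose[OF c this] have "(\<lambda>j. norm (x (\<sigma> j) - l)) \<longlonglongrightarrow> c" .
  moreover have "(\<lambda>j. norm (x (\<sigma> j) - l)) \<longlonglongrightarrow> 0"
    using assms(3) by (intro tendsto_norm_zero LIM_zero)
  ultimately have "c = 0" by (rule LIMSEQ_unique)
  with c show ?thesis by (simp add: tendsto_norm_zero_iff LIM_zero_iff)
qed

section \<open>The proximal map\<close>

locale closed_proper_convex =
  fixes g :: "'a::euclidean_space \<Rightarrow> ereal"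
  assumes not_minf: "\<And>x. g x \<noteq> -\<infinity>"
    and proper: "\<exists>x. g x \<noteq> \<infinity>"
    and convex: "convex_ext g"
    and lsc: "lsc_ext g"
begin

lemma ereal_real_of_finite: "g x \<noteq> \<infinity> \<Longrightarrow> ereal (real_of_ereal (g x)) = g x"
  using not_minf[of x] by (cases "g x") auto

lemma convex_real:
  assumes "0 \<le> t" "t \<le> 1" "g u \<noteq> \<infinity>" "g w \<noteq> \<infinity>"
  shows "g ((1 - t) *\<^sub>R u + t *\<^sub>R w) \<le> ereal ((1 - t) * real_of_ereal (g u) + t * real_of_ereal (g w))"
proof -
  have "g ((1 - t) *\<^sub>R u + t *\<^sub>R w) \<le> ereal (1 - t) * g u + ereal t * g w"
    using convex assms(1,2) unfolding convex_ext_def by blast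
  also have "\<dots> = ereal (1 - t) * ereal (real_of_ereal (g u)) + ereal t * ereal (real_of_ereal (g w))"
    using assms(3,4) by (simp add: ereal_real_of_finite)
  finally show ?thesis by simp
qed

lemma exists_affine_minorant:
  obtains x0 m b where "0 \<le> b" and "\<And>v. ereal (m - b * norm (v - x0)) \<le> g v"
proof -
  obtain x0 where "g x0 \<noteq> \<infinity>" using proper by blast
  define a where "a = real_of_ereal (g x0)"
  obtain m where m: "\<And>v. v \<in> cball x0 1 \<Longrightarrow> ereal m \<le> g v"
    using lsc_ext_bounded_below_on_compact[OF not_minf lsc compact_cball] by blast
  have "ereal m \<le> ereal a"
    unfolding a_def ereal_real_of_finite[OF \<open>g x0 \<noteq> \<infinity>\<close>] using m[of x0] by simp
  then have "m \<le> a" by simp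
  have "ereal (m - (a - m) * norm (v - x0)) \<le> g v" for v
  proof (cases "norm (v - x0) \<le> 1 \<or> g v = \<infinity>")
    case True
    then show ?thesis
    proof
      assume "norm (v - x0) \<le> 1"
      then have "ereal m \<le> g v" using m by (simp add: dist_norm norm_minus_commute)
      moreover have "m - (a - m) * norm (v - x0) \<le> m" using \<open>m \<le> a\<close> by simp
      ultimately show ?thesis by (meson ereal_less_eq(3) order.trans)
    qed simp
  next
    case False
    define R where "R = norm (v - x0)"
    have "1 < R" using False by (simp add: R_def)
    define w where "w = (1 - 1/R) *\<^sub>R x0 + (1/R) *\<^sub>R v"
    have "w - x0 = (1/R) *\<^sub>R (v - x0)" by (simp add: w_def algebra_simps)
    then have "norm (w - x0) = 1" using \<open>1 < R\<close> by (auto simp: R_def)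
    then have "ereal m \<le> g w" using m by (simp add: dist_norm norm_minus_commute)
    also have "\<dots> \<le> ereal ((1 - 1/R) * a + 1/R * real_of_ereal (g v))"
      unfolding w_def a_def using \<open>1 < R\<close> False \<open>g x0 \<noteq> \<infinity>\<close> by (intro convex_real) auto
    finally have "R * m \<le> (R - 1) * a + real_of_ereal (g v)"
      using \<open>1 < R\<close> by (simp add: field_simps)
    then have "m - (a - m) * R \<le> real_of_ereal (g v)"
      using \<open>m \<le> a\<close> by (simp add: algebra_simps)
    then have "ereal (m - (a - m) * R) \<le> ereal (real_of_ereal (g v))" by simp
    also have "\<dots> = g v" using False by (simp add: ereal_real_of_finite)
    finally show ?thesis by (simp add: R_def)
  qed
  with \<open>m \<le> a\<close> show thesis by (intro that[of "a - m"]) auto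
qed

lemma prox_objective_bounded_below:
  assumes "0 < \<gamma>"
  obtains c where "\<And>w. g w \<noteq> \<infinity> \<Longrightarrow> c \<le> real_of_ereal (g w) + norm (w - x) ^ 2 / (2 * \<gamma>)"
proof -
  obtain x0 m b where "0 \<le> b" and minor: "\<And>v. ereal (m - b * norm (v - x0)) \<le> g v"
    using exists_affine_minorant by metis
  define d where "d = norm (x0 - x)"
  have "m - b * d - \<gamma> * b\<^sup>2 / 2 \<le> real_of_ereal (g w) + norm (w - x) ^ 2 / (2 * \<gamma>)"
    if "g w \<noteq> \<infinity>" for w
  proof -
    have "ereal (m - b * norm (w - x0)) \<le> ereal (real_of_ereal (g w))"
      using minor[of w] ereal_real_of_finite[OF that] by simp
    then have "m - b * norm (w - x0) \<le> real_of_ereal (g w)" by simp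
    moreover have "norm (w - x0) \<le> norm (w - x) + d"
      using norm_triangle_ineq[of "w - x" "x - x0"] by (simp add: d_def norm_minus_commute)
    then have "b * norm (w - x0) \<le> b * norm (w - x) + b * d"
      using \<open>0 \<le> b\<close> by (metis distrib_left mult_left_mono)
    moreover have "b * norm (w - x) \<le> norm (w - x) ^ 2 / (2 * \<gamma>) + \<gamma> * b\<^sup>2 / 2"
    proof -
      have "b * norm (w - x) = 2 * \<gamma> * (b * norm (w - x)) / (2 * \<gamma>)" using assms by simp
      also have "\<dots> \<le> (norm (w - x) ^ 2 + (\<gamma> * b) ^ 2) / (2 * \<gamma>)"
        using sum_squares_bound[of "norm (w - x)" "\<gamma> * b"] assms
        by (intro divide_right_mono) (simp_all add: ac_simps)
      also have "\<dots> = norm (w - x) ^ 2 / (2 * \<gamma>) + \<gamma> * b\<^sup>2 / 2"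
        using assms by (simp add: add_divide_distrib power2_eq_square)
      finally show ?thesis .
    qed
    ultimately show ?thesis by linarith
  qed
  then show thesis by (rule that)
qed

lemma prox_objective_midpoint_bound:
  assumes "0 < \<gamma>" and "g u \<noteq> \<infinity>" and "g v \<noteq> \<infinity>"
    and low: "\<And>w. g w \<noteq> \<infinity> \<Longrightarrow> c \<le> real_of_ereal (g w) + norm (w - x) ^ 2 / (2 * \<gamma>)"
  shows "norm (u - v) ^ 2 \<le> 4 * \<gamma> * ((real_of_ereal (g u) + norm (u - x) ^ 2 / (2 * \<gamma>))
                                   + (real_of_ereal (g v) + norm (v - x) ^ 2 / (2 * \<gamma>)) - 2 * c)"
proof -
  define a b where "a = real_of_ereal (g u)" and "b = real_of_ereal (g v)"
  define w where "w = (1/2) *\<^sub>R (u + v)"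
  have "g w \<le> ereal ((1 - 1/2) * a + 1/2 * b)"
    unfolding w_def a_def b_def using assms(2,3) convex_real[of "1/2" u v]
    by (simp add: scaleR_add_right)
  then have "g w \<noteq> \<infinity>" by auto
  have "ereal (real_of_ereal (g w)) \<le> ereal ((a + b) / 2)"
    using \<open>g w \<le> _\<close> by (simp add: ereal_real_of_finite[OF \<open>g w \<noteq> \<infinity>\<close>] field_simps)
  then have "real_of_ereal (g w) \<le> (a + b) / 2" by simp
  with \<open>g w \<noteq> \<infinity>\<close> have "c \<le> (a + b) / 2 + norm (w - x) ^ 2 / (2 * \<gamma>)"
    using low[of w] by linarith
  also have "norm (w - x) ^ 2 = (norm (u - x) ^ 2 + norm (v - x) ^ 2) / 2 - norm (u - v) ^ 2 / 4"
    unfolding w_def by (rule norm_midpoint_diff_sq)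
  finally have "8 * \<gamma> * c \<le> 4 * \<gamma> * (a + b) + 2 * (norm (u - x) ^ 2 + norm (v - x) ^ 2) - norm (u - v) ^ 2"
    using assms(1) by (simp add: field_simps)
  moreover have "4 * \<gamma> * ((a + norm (u - x) ^ 2 / (2 * \<gamma>)) + (b + norm (v - x) ^ 2 / (2 * \<gamma>)) - 2 * c)
      = 4 * \<gamma> * (a + b) + 2 * (norm (u - x) ^ 2 + norm (v - x) ^ 2) - 8 * \<gamma> * c"
    using assms(1) by (simp add: field_simps)
  ultimately show ?thesis unfolding a_def b_def by linarith
qed

lemma prox_set_finite:
  assumes "v \<in> prox_set g \<gamma> x"
  shows "g v \<noteq> \<infinity>"
proof
  assume "g v = \<infinity>"
  obtain w where "g w \<noteq> \<infinity>" using proper by blast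
  moreover have "g v + ereal (norm (v - x) ^ 2 / (2 * \<gamma>)) \<le> g w + ereal (norm (w - x) ^ 2 / (2 * \<gamma>))"
    using assms unfolding prox_set_def by blast
  ultimately show False using \<open>g v = \<infinity>\<close> not_minf[of w] by (cases "g w") auto
qed

lemma prox_set_nonempty:
  assumes "0 < \<gamma>"
  shows "\<exists>v. v \<in> prox_set g \<gamma> x"
proof -
  define p where "p w = real_of_ereal (g w) + norm (w - x) ^ 2 / (2 * \<gamma>)" for w
  obtain c0 where c0: "\<And>w. g w \<noteq> \<infinity> \<Longrightarrow> c0 \<le> p w"
    using prox_objective_bounded_below[OF assms] unfolding p_def by metis
  define c where "c = Inf (p ` {w. g w \<noteq> \<infinity>})"
  have dom_ne: "{w. g w \<noteq> \<infinity>} \<noteq> {}" using proper by blast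
  have c_le: "c \<le> p w" if "g w \<noteq> \<infinity>" for w
    unfolding c_def using that c0 by (intro cInf_lower) (auto simp: bdd_below_def)
  have "\<exists>w. g w \<noteq> \<infinity> \<and> p w < c + inverse (real (Suc n))" for n
    using cInf_lessD[of "p ` {w. g w \<noteq> \<infinity>}" "c + inverse (real (Suc n))"] dom_ne
    unfolding c_def by auto
  then obtain u where u_dom: "\<And>n. g (u n) \<noteq> \<infinity>"
    and u_min: "\<And>n. p (u n) < c + inverse (real (Suc n))"
    by metis
  have "Cauchy u"
  proof (rule Cauchy_of_norm_diff_sq_le)
    show "norm (u i - u j) ^ 2 \<le> 4 * \<gamma> * inverse (real (Suc i)) + 4 * \<gamma> * inverse (real (Suc j))" for i j
    proof -
      have "norm (u i - u j) ^ 2 \<le> 4 * \<gamma> * (p (u i) + p (u j) - 2 * c)"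
        using assms u_dom c_le unfolding p_def by (intro prox_objective_midpoint_bound) auto
      also have "\<dots> \<le> 4 * \<gamma> * (inverse (real (Suc i)) + inverse (real (Suc j)))"
        using u_min[of i] u_min[of j] assms by (intro mult_left_mono) auto
      finally show ?thesis by (simp add: distrib_left)
    qed
    show "(\<lambda>n. 4 * \<gamma> * inverse (real (Suc n))) \<longlonglongrightarrow> 0"
      using tendsto_mult_right_zero[OF LIMSEQ_inverse_real_of_nat] by simp
  qed
  then obtain v where lim: "u \<longlonglongrightarrow> v" using Cauchy_convergent_iff convergent_def by blast
  define q where "q w = norm (w - x) ^ 2 / (2 * \<gamma>)" for w
  have "g v \<le> ereal (c + 0 - q v)"
  proof (rule lsc_ext_tendsto_le[OF lsc lim])
    show "(\<lambda>n. c + inverse (real (Suc n)) - q (u n)) \<longlonglongrightarrow> c + 0 - q v"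
      unfolding q_def using assms by (intro tendsto_intros LIMSEQ_inverse_real_of_nat lim) auto
    show "g (u n) \<le> ereal (c + inverse (real (Suc n)) - q (u n))" for n
      using u_min[of n] ereal_real_of_finite[OF u_dom[of n]]
      by (metis p_def q_def ereal_less_eq(3) less_diff_eq less_imp_le add.commute)
  qed
  have "v \<in> prox_set g \<gamma> x"
    unfolding prox_set_def
  proof (intro CollectI allI)
    fix w
    have "g v + ereal (q v) \<le> g w + ereal (q w)" if "g w \<noteq> \<infinity>"
    proof -
      have "g v + ereal (q v) \<le> ereal (c - q v) + ereal (q v)"
        using \<open>g v \<le> ereal (c + 0 - q v)\<close> by (intro add_right_mono) simp
      also have "\<dots> \<le> ereal (p w)" using c_le[OF that] by simp
      also have "\<dots> = g w + ereal (q w)"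
        using ereal_real_of_finite[OF that] by (metis p_def q_def plus_ereal.simps(1))
      finally show ?thesis .
    qed
    then show "g v + ereal (norm (v - x) ^ 2 / (2 * \<gamma>)) \<le> g w + ereal (norm (w - x) ^ 2 / (2 * \<gamma>))"
      unfolding q_def by (cases "g w = \<infinity>") auto
  qed
  then show ?thesis by blast
qed

lemma prox_set_variational_inequality:
  assumes "0 < \<gamma>" and v: "v \<in> prox_set g \<gamma> x" and "g w \<noteq> \<infinity>"
  shows "(x - v) \<bullet> (w - v) \<le> \<gamma> * (real_of_ereal (g w) - real_of_ereal (g v))"
proof -
  define a b where "a = real_of_ereal (g v)" and "b = real_of_ereal (g w)"
  define I N where "I = (v - x) \<bullet> (w - v)" and "N = norm (w - v) ^ 2"
  have "g v \<noteq> \<infinity>" using prox_set_finite[OF v] .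
  have "2 * \<gamma> * (a - b) \<le> 2 * I + t * N" if t: "0 < t" "t \<le> 1" for t
  proof -
    define z where "z = (1 - t) *\<^sub>R v + t *\<^sub>R w"
    have "g v + ereal (norm (v - x) ^ 2 / (2 * \<gamma>)) \<le> g z + ereal (norm (z - x) ^ 2 / (2 * \<gamma>))"
      using v unfolding prox_set_def by blast
    also have "\<dots> \<le> ereal ((1 - t) * a + t * b) + ereal (norm (z - x) ^ 2 / (2 * \<gamma>))"
      unfolding z_def a_def b_def using t \<open>g v \<noteq> \<infinity>\<close> assms(3)
      by (intro add_right_mono convex_real) auto
    finally have "a + norm (v - x) ^ 2 / (2 * \<gamma>) \<le> (1 - t) * a + t * b + norm (z - x) ^ 2 / (2 * \<gamma>)"
      using ereal_real_of_finite[OF \<open>g v \<noteq> \<infinity>\<close>] unfolding a_def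
      by (metis ereal_less_eq(3) plus_ereal.simps(1))
    then have "2 * \<gamma> * (a + norm (v - x) ^ 2 / (2 * \<gamma>))
        \<le> 2 * \<gamma> * ((1 - t) * a + t * b + norm (z - x) ^ 2 / (2 * \<gamma>))"
      using assms(1) by (intro mult_left_mono) auto
    then have "2 * \<gamma> * a + norm (v - x) ^ 2 \<le> 2 * \<gamma> * ((1 - t) * a + t * b) + norm (z - x) ^ 2"
      using assms(1) by (simp add: distrib_left)
    moreover have "z - x = (v - x) + t *\<^sub>R (w - v)" by (simp add: z_def algebra_simps)
    then have "norm (z - x) ^ 2 = norm (v - x) ^ 2 + 2 * t * I + t\<^sup>2 * N"
      unfolding I_def N_def by (simp only: norm_add_scaleR_sq)
    ultimately have "t * (2 * \<gamma> * (a - b)) \<le> t * (2 * I + t * N)"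
      by (simp add: algebra_simps power2_eq_square)
    then show ?thesis using t by simp
  qed
  then have "\<forall>\<^sub>F t in at_right 0. 2 * \<gamma> * (a - b) \<le> 2 * I + t * N"
    by (auto simp: eventually_at_right_field intro: exI[of _ 1])
  moreover have "((\<lambda>t. 2 * I + t * N) \<longlongrightarrow> 2 * I + 0 * N) (at_right 0)"
    by (intro tendsto_intros)
  ultimately have "2 * \<gamma> * (a - b) \<le> 2 * I"
    using tendsto_lowerbound[OF _ _ trivial_limit_at_right_real] by fastforce
  then show ?thesis unfolding a_def b_def I_def by (simp add: inner_diff_left algebra_simps)
qed

lemma prox_set_nonexpansive:
  assumes "0 < \<gamma>" and v1: "v1 \<in> prox_set g \<gamma> x1" and v2: "v2 \<in> prox_set g \<gamma> x2"
  shows "norm (v1 - v2) \<le> norm (x1 - x2)"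
proof -
  have "(x1 - v1) \<bullet> (v2 - v1) + (x2 - v2) \<bullet> (v1 - v2) \<le> 0"
    using prox_set_variational_inequality[OF assms(1) v1 prox_set_finite[OF v2]]
      prox_set_variational_inequality[OF assms(1) v2 prox_set_finite[OF v1]]
    by (simp add: algebra_simps)
  then have "norm (v1 - v2) ^ 2 \<le> (x1 - x2) \<bullet> (v1 - v2)"
    by (simp add: power2_norm_eq_inner inner_diff_left inner_diff_right inner_commute algebra_simps)
  also have "\<dots> \<le> norm (x1 - x2) * norm (v1 - v2)" by (rule norm_cauchy_schwarz)
  finally show ?thesis
    by (metis norm_ge_zero power2_eq_square mult_right_le_imp_le order_le_less mult_zero_left mult_zero_right)
qed

lemma prox_in_prox_set:
  assumes "0 < \<gamma>"
  shows "prox g \<gamma> x \<in> prox_set g \<gamma> x"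
  unfolding prox_def
proof (rule theI')
  obtain v where v: "v \<in> prox_set g \<gamma> x" using prox_set_nonempty[OF assms] by blast
  moreover have "w = v" if "w \<in> prox_set g \<gamma> x" for w
    using prox_set_nonexpansive[OF assms that v] by simp
  ultimately show "\<exists>!v. v \<in> prox_set g \<gamma> x" by blast
qed

lemma prox_finite: "0 < \<gamma> \<Longrightarrow> g (prox g \<gamma> x) \<noteq> \<infinity>"
  using prox_set_finite prox_in_prox_set by blast

lemma prox_nonexpansive: "0 < \<gamma> \<Longrightarrow> norm (prox g \<gamma> x - prox g \<gamma> y) \<le> norm (x - y)"
  using prox_set_nonexpansive prox_in_prox_set by blast

lemma prox_variational_inequality:
  "0 < \<gamma> \<Longrightarrow> g w \<noteq> \<infinity> \<Longrightarrow>
    (x - prox g \<gamma> x) \<bullet> (w - prox g \<gamma> x) \<le> \<gamma> * (real_of_ereal (g w) - real_of_ereal (g (prox g \<gamma> x)))"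
  using prox_set_variational_inequality prox_in_prox_set by blast

lemma forward_backward_step_exact:
  fixes f :: "'a \<Rightarrow> real" and \<theta> H :: 'a
  assumes grad: "\<And>x. (f has_derivative (\<lambda>h. df x \<bullet> h)) (at x)"
    and lip: "\<And>x y. norm (df x - df y) \<le> L * norm (x - y)"
    and "convex_on UNIV f" and "0 < \<gamma>" and "\<gamma> * L \<le> 1" and "g ts \<noteq> \<infinity>"
  defines "v \<equiv> prox g \<gamma> (\<theta> - \<gamma> *\<^sub>R H)"
  shows "norm (v - ts) ^ 2 + 2 * \<gamma> * ((f v + real_of_ereal (g v)) - (f ts + real_of_ereal (g ts)))
    \<le> norm (\<theta> - ts) ^ 2 - 2 * \<gamma> * ((v - ts) \<bullet> (H - df \<theta>))"
proof -
  define X Y Z where "X = (\<theta> - v) \<bullet> (ts - v)" and "Y = H \<bullet> (ts - v)" and "Z = df \<theta> \<bullet> (v - ts)"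
  have prox_ineq: "X - \<gamma> * Y \<le> \<gamma> * (real_of_ereal (g ts) - real_of_ereal (g v))"
    using prox_variational_inequality[OF assms(4,6), of "\<theta> - \<gamma> *\<^sub>R H"]
    unfolding X_def Y_def v_def by (simp add: inner_diff_left)
  have "f v - f ts \<le> Z + L / 2 * norm (\<theta> - v) ^ 2"
    using descent_lemma[OF grad lip, where x = \<theta> and y = v] convex_on_gradient_inequality[OF grad assms(3), of \<theta> ts]
    unfolding Z_def by (simp add: inner_diff_right norm_minus_commute)
  then have "2 * \<gamma> * (f v - f ts) \<le> 2 * \<gamma> * Z + (\<gamma> * L) * norm (\<theta> - v) ^ 2"
    using mult_left_mono[of _ _ "2 * \<gamma>"] assms(4) by (fastforce simp: algebra_simps)
  moreover have "(\<gamma> * L) * norm (\<theta> - v) ^ 2 \<le> norm (\<theta> - v) ^ 2"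
    using mult_right_mono[OF assms(5), of "norm (\<theta> - v) ^ 2"] by simp
  moreover have "norm (\<theta> - ts) ^ 2 = norm (\<theta> - v) ^ 2 + norm (v - ts) ^ 2 - 2 * X"
    using norm_add_scaleR_sq[of "\<theta> - v" 1 "v - ts"] unfolding X_def
    by (simp add: inner_minus_right[symmetric])
  moreover have "(v - ts) \<bullet> (H - df \<theta>) = - Y - Z"
    unfolding Y_def Z_def by (simp add: inner_diff_right inner_commute)
  ultimately show ?thesis using prox_ineq by (simp only: ring_distribs mult.assoc)
qed

lemma forward_backward_step:
  fixes f :: "'a \<Rightarrow> real" and \<theta> H :: 'a
  assumes grad: "\<And>x. (f has_derivative (\<lambda>h. df x \<bullet> h)) (at x)"
    and lip: "\<And>x y. norm (df x - df y) \<le> L * norm (x - y)"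
    and "convex_on UNIV f" and "0 < \<gamma>" and "\<gamma> * L \<le> 1" and "g ts \<noteq> \<infinity>"
  defines "v \<equiv> prox g \<gamma> (\<theta> - \<gamma> *\<^sub>R H)"
  shows "norm (v - ts) ^ 2 + 2 * \<gamma> * ((f v + real_of_ereal (g v)) - (f ts + real_of_ereal (g ts)))
    \<le> norm (\<theta> - ts) ^ 2 - 2 * \<gamma> * ((Tmap g df \<gamma> \<theta> - ts) \<bullet> (H - df \<theta>))
       + 2 * \<gamma>\<^sup>2 * norm (H - df \<theta>) ^ 2"
proof -
  define T \<eta> where "T = Tmap g df \<gamma> \<theta>" and "\<eta> = H - df \<theta>"
  have "norm (v - T) \<le> norm ((\<theta> - \<gamma> *\<^sub>R H) - (\<theta> - \<gamma> *\<^sub>R df \<theta>))"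
    unfolding v_def T_def Tmap_def using assms(4) by (rule prox_nonexpansive)
  also have "\<dots> = \<gamma> * norm \<eta>"
    using assms(4) by (simp add: \<eta>_def scaleR_diff_right[symmetric] norm_minus_commute)
  finally have "- ((v - T) \<bullet> \<eta>) \<le> \<gamma> * norm \<eta> ^ 2"
    using norm_cauchy_schwarz[of "T - v" \<eta>] mult_right_mono[of _ _ "norm \<eta>"]
    by (fastforce simp: norm_minus_commute power2_eq_square inner_diff_left)
  moreover have "(v - ts) \<bullet> \<eta> = (T - ts) \<bullet> \<eta> + (v - T) \<bullet> \<eta>"
    by (simp add: inner_diff_left)
  ultimately have "- 2 * \<gamma> * ((v - ts) \<bullet> \<eta>) \<le> - 2 * \<gamma> * ((T - ts) \<bullet> \<eta>) + 2 * \<gamma>\<^sup>2 * norm \<eta> ^ 2"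
    using mult_left_mono[of _ _ "2 * \<gamma>"] assms(4) by (fastforce simp: algebra_simps power2_eq_square)
  with forward_backward_step_exact[OF assms(1-6), of \<theta> H]
  show ?thesis unfolding v_def T_def \<eta>_def by linarith
qed

end

section \<open>Inexact forward-backward iterations\<close>

locale inexact_forward_backward = closed_proper_convex g
  for g :: "'a::euclidean_space \<Rightarrow> ereal" +
  fixes f :: "'a \<Rightarrow> real" and df :: "'a \<Rightarrow> 'a" and L :: real
    and \<gamma> :: "nat \<Rightarrow> real" and \<theta> H :: "nat \<Rightarrow> 'a"
  assumes grad: "\<And>x. (f has_derivative (\<lambda>h. df x \<bullet> h)) (at x)"
    and lip: "\<And>x y. norm (df x - df y) \<le> L * norm (x - y)"
    and f_convex: "convex_on UNIV f"
    and step_pos: "\<And>n. 0 < \<gamma> (Suc n)"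
    and step_le: "\<And>n. \<gamma> (Suc n) * L \<le> 1"
    and iter: "\<And>n. \<theta> (Suc n) = prox g (\<gamma> (Suc n)) (\<theta> n - \<gamma> (Suc n) *\<^sub>R H (Suc n))"
begin

abbreviation minimizers :: "'a set"
  where "minimizers \<equiv> {x. \<forall>y. ereal (f x) + g x \<le> ereal (f y) + g y}"

abbreviation F :: "'a \<Rightarrow> real"
  where "F x \<equiv> f x + real_of_ereal (g x)"

text \<open>The index is shifted by one against the paper: \<open>noise k\<close> is \<open>\<eta>\<^sub>k\<^sub>+\<^sub>1\<close>.\<close>
abbreviation noise :: "nat \<Rightarrow> 'a"
  where "noise k \<equiv> H (Suc k) - df (\<theta> k)"

abbreviation noise_inner :: "'a \<Rightarrow> nat \<Rightarrow> real"
  where "noise_inner ts k \<equiv> \<gamma> (Suc k) * ((Tmap g df (\<gamma> (Suc k)) (\<theta> k) - ts) \<bullet> noise k)"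

abbreviation noise_sq :: "nat \<Rightarrow> real"
  where "noise_sq k \<equiv> \<gamma> (Suc k) ^ 2 * norm (noise k) ^ 2"

lemma minimizer_finite:
  assumes "ts \<in> minimizers"
  shows "g ts \<noteq> \<infinity>"
proof
  assume "g ts = \<infinity>"
  obtain y where "g y \<noteq> \<infinity>" using proper by blast
  with assms \<open>g ts = \<infinity>\<close> not_minf[of y] show False by (cases "g y") auto
qed

lemma minimizer_le:
  assumes "ts \<in> minimizers" and "g y \<noteq> \<infinity>"
  shows "F ts \<le> F y"
proof -
  have "ereal (F ts) \<le> ereal (F y)"
    using assms ereal_real_of_finite[OF minimizer_finite[OF assms(1)]] ereal_real_of_finite[OF assms(2)]
    by (metis (no_types, lifting) mem_Collect_eq plus_ereal.simps(1))
  then show ?thesis by simp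
qed

lemma iterate_finite: "g (\<theta> (Suc n)) \<noteq> \<infinity>"
  using prox_finite[OF step_pos] iter by simp

lemma fejer_step:
  assumes "ts \<in> minimizers"
  shows "norm (\<theta> (Suc n) - ts) ^ 2 + 2 * (\<gamma> (Suc n) * (F (\<theta> (Suc n)) - F ts))
    \<le> norm (\<theta> n - ts) ^ 2 + (2 * noise_sq n - 2 * noise_inner ts n)"
  using forward_backward_step[OF grad lip f_convex step_pos[of n] step_le[of n] minimizer_finite[OF assms],
      where \<theta> = "\<theta> n" and H = "H (Suc n)"]
  by (simp add: iter[symmetric] mult.assoc)

lemma gap_nonneg:
  assumes "ts \<in> minimizers"
  shows "0 \<le> \<gamma> (Suc n) * (F (\<theta> (Suc n)) - F ts)"
  using minimizer_le[OF assms iterate_finite[of n]] step_pos[of n] by simp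

lemma distance_bound:
  assumes "ts \<in> minimizers" and "m \<le> n"
  shows "norm (\<theta> (Suc n) - ts) ^ 2
    \<le> norm (\<theta> m - ts) ^ 2 - 2 * (\<Sum>k=m..n. noise_inner ts k) + 2 * (\<Sum>k=m..n. noise_sq k)"
proof -
  have "norm (\<theta> (Suc k) - ts) ^ 2 \<le> norm (\<theta> k - ts) ^ 2 + (2 * noise_sq k - 2 * noise_inner ts k)" for k
    using fejer_step[OF assms(1), of k] gap_nonneg[OF assms(1), of k] by linarith
  from telescope_le[where a = "\<lambda>k. norm (\<theta> k - ts) ^ 2", OF this assms(2)] show ?thesis
    by (simp add: sum_subtractf sum_distrib_left)
qed

lemma distance_convergent:
  assumes "ts \<in> minimizers" and "summable (noise_inner ts)" and "summable noise_sq"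
  shows "convergent (\<lambda>n. norm (\<theta> n - ts))"
    and "summable (\<lambda>n. \<gamma> (Suc n) * (F (\<theta> (Suc n)) - F ts))"
proof -
  have "summable (\<lambda>k. 2 * noise_sq k - 2 * noise_inner ts k)"
    using assms(2,3) by (intro summable_diff summable_mult)
  note descent = perturbed_descent_convergent[where a = "\<lambda>k. norm (\<theta> k - ts) ^ 2"
      and d = "\<lambda>n. 2 * (\<gamma> (Suc n) * (F (\<theta> (Suc n)) - F ts))", OF fejer_step[OF assms(1)] _ _ this]
  have "(\<lambda>n. norm (\<theta> n - ts) ^ 2) \<longlonglongrightarrow> lim (\<lambda>n. norm (\<theta> n - ts) ^ 2)"
    using descent(1) gap_nonneg[OF assms(1)] by (simp add: convergent_LIMSEQ_iff)
  from tendsto_real_sqrt[OF this] show "convergent (\<lambda>n. norm (\<theta> n - ts))"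
    by (auto simp: convergent_def)
  show "summable (\<lambda>n. \<gamma> (Suc n) * (F (\<theta> (Suc n)) - F ts))"
    using descent(2) gap_nonneg[OF assms(1)] by (simp add: summable_cmult_iff)
qed

lemma limit_in_minimizers:
  assumes "u \<longlonglongrightarrow> l" and "\<And>j. g (u j) \<noteq> \<infinity>" and "(\<lambda>j. F (u j)) \<longlonglongrightarrow> F ts"
    and ts: "ts \<in> minimizers"
  shows "l \<in> minimizers"
proof -
  have "isCont f l" using grad has_derivative_continuous by blast
  then have "(\<lambda>j. F (u j) - f (u j)) \<longlonglongrightarrow> F ts - f l"
    using assms(1,3) by (intro tendsto_diff isCont_tendsto_compose[of l f])
  then have "g l \<le> ereal (F ts - f l)"
    by (rule lsc_ext_tendsto_le[OF lsc assms(1)]) (simp add: ereal_real_of_finite[OF assms(2)])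
  then have "ereal (f l) + g l \<le> ereal (f l) + ereal (F ts - f l)" by (rule add_left_mono)
  also have "\<dots> = ereal (f ts) + ereal (real_of_ereal (g ts))" by simp
  also have "\<dots> = ereal (f ts) + g ts" by (simp add: ereal_real_of_finite[OF minimizer_finite[OF ts]])
  finally have l_le: "ereal (f l) + g l \<le> ereal (f ts) + g ts" .
  show ?thesis
  proof (intro CollectI allI)
    fix y
    have "ereal (f ts) + g ts \<le> ereal (f y) + g y" using ts by blast
    with l_le show "ereal (f l) + g l \<le> ereal (f y) + g y" by (rule order.trans)
  qed
qed

lemma tendsto_minimizer:
  assumes summable_noise: "\<forall>ts\<in>minimizers. summable (noise_inner ts)" "summable noise_sq"
    and "\<not> summable (\<lambda>n. \<gamma> (Suc n))" and "minimizers \<noteq> {}"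
  shows "\<exists>t\<in>minimizers. \<theta> \<longlonglongrightarrow> t"
proof -
  obtain ts where ts: "ts \<in> minimizers" using assms(4) by blast
  note dist_conv = distance_convergent[OF ts bspec[OF summable_noise(1) ts] summable_noise(2)]
  define e where "e n = F (\<theta> (Suc n)) - F ts" for n
  have e_nonneg: "0 \<le> e n" for n
    unfolding e_def using minimizer_le[OF ts iterate_finite] by simp
  have "\<exists>n\<ge>j. e n < inverse (real (Suc j))" for j
    using dist_conv(2) assms(3) step_pos less_imp_le unfolding e_def
    by (intro frequently_small_of_summable_weighted[where w = "\<lambda>n. \<gamma> (Suc n)"]) auto
  then obtain nn where nn: "\<And>j. j \<le> nn j" "\<And>j. e (nn j) < inverse (real (Suc j))" by metis
  have "bounded (range (\<lambda>j. \<theta> (Suc (nn j))))"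
    using bounded_range_of_convergent_norm_diff[OF dist_conv(1)] by (rule bounded_subset) auto
  from bounded_imp_convergent_subsequence[OF this] obtain t r
    where r: "strict_mono r" and "((\<lambda>j. \<theta> (Suc (nn j))) \<circ> r) \<longlonglongrightarrow> t" by blast
  then have lim: "(\<lambda>j. \<theta> (Suc (nn (r j)))) \<longlonglongrightarrow> t" by (simp add: o_def)
  have "(\<lambda>j. e (nn (r j))) \<longlonglongrightarrow> 0"
  proof (rule real_tendsto_sandwich[OF _ _ tendsto_const LIMSEQ_inverse_real_of_nat])
    have "e (nn (r j)) \<le> inverse (real (Suc j))" for j
    proof -
      have "inverse (real (Suc (r j))) \<le> inverse (real (Suc j))"
        using seq_suble[OF r, of j] by (simp add: le_imp_inverse_le)
      with nn(2)[of "r j"] show ?thesis by linarith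
    qed
    then show "\<forall>\<^sub>F j in sequentially. e (nn (r j)) \<le> inverse (real (Suc j))" by simp
  qed (simp add: e_nonneg)
  then have "(\<lambda>j. F (\<theta> (Suc (nn (r j))))) \<longlonglongrightarrow> F ts"
    unfolding e_def by (simp add: LIM_zero_iff)
  with lim have "t \<in> minimizers" by (rule limit_in_minimizers[OF _ iterate_finite _ ts])
  moreover have "j \<le> Suc (nn (r j))" for j
    using seq_suble[OF r, of j] nn(1)[of "r j"] by linarith
  ultimately have "\<theta> \<longlonglongrightarrow> t"
    using summable_noise distance_convergent(1)
    by (intro tendsto_of_convergent_norm_diff_subseq[where \<sigma> = "\<lambda>j. Suc (nn (r j))", OF _ _ lim]) auto
  with \<open>t \<in> minimizers\<close> show ?thesis by blast
qed

end

theorem theorem4: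
  fixes f :: "'a::euclidean_space \<Rightarrow> real" and df :: "'a \<Rightarrow> 'a"
    and g :: "'a \<Rightarrow> ereal" and L :: real
    and \<gamma> :: "nat \<Rightarrow> real" and \<theta> H :: "nat \<Rightarrow> 'a"
  assumes g_notminf: "\<forall>x. g x \<noteq> -\<infinity>"
    and g_proper: "\<exists>x. g x \<noteq> \<infinity>"
    and g_convex: "convex_ext g"
    and g_lsc: "lsc_ext g"
    and f_grad: "\<forall>x. (f has_derivative (\<lambda>h. df x \<bullet> h)) (at x)"
    and f_grad_cont: "continuous_on UNIV df"
    and L_pos: "L > 0"
    and f_lip: "\<forall>x y. norm (df x - df y) \<le> L * norm (x - y)"
    and f_convex: "convex_on UNIV f"
    and argmin_ne: "{x. \<forall>y. ereal (f x) + g x \<le> ereal (f y) + g y} \<noteq> {}"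
    and step_pos: "\<forall>n\<ge>1. 0 < \<gamma> n \<and> \<gamma> n \<le> 1 / L"
    and step_noninc: "\<forall>n\<ge>1. \<gamma> (Suc n) \<le> \<gamma> n"
    and theta0: "\<theta> 0 \<in> dom_ext g"
    and iter: "\<forall>n. \<theta> (Suc n) = prox g (\<gamma> (Suc n)) (\<theta> n - \<gamma> (Suc n) *\<^sub>R H (Suc n))"
  shows
    "(\<forall>ts \<in> {x. \<forall>y. ereal (f x) + g x \<le> ereal (f y) + g y}. \<forall>m n. m \<le> n \<longrightarrow>
        norm (\<theta> (Suc n) - ts) ^ 2
          \<le> norm (\<theta> m - ts) ^ 2
             - 2 * (\<Sum>k=m..n. \<gamma> (Suc k) *
                   ((Tmap g df (\<gamma> (Suc k)) (\<theta> k) - ts) \<bullet> (H (Suc k) - df (\<theta> k))))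
             + 2 * (\<Sum>k=m..n. \<gamma> (Suc k) ^ 2 * norm (H (Suc k) - df (\<theta> k)) ^ 2))
     \<and>
     ((\<forall>ts \<in> {x. \<forall>y. ereal (f x) + g x \<le> ereal (f y) + g y}.
          summable (\<lambda>k. \<gamma> (Suc k) *
                   ((Tmap g df (\<gamma> (Suc k)) (\<theta> k) - ts) \<bullet> (H (Suc k) - df (\<theta> k)))))
       \<and> summable (\<lambda>k. \<gamma> (Suc k) ^ 2 * norm (H (Suc k) - df (\<theta> k)) ^ 2)
      \<longrightarrow>
        (\<forall>ts \<in> {x. \<forall>y. ereal (f x) + g x \<le> ereal (f y) + g y}.
            convergent (\<lambda>n. norm (\<theta> n - ts)))
        \<and> (\<not> summable (\<lambda>n. \<gamma> (Suc n)) \<longrightarrow>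
            (\<exists>tinf \<in> {x. \<forall>y. ereal (f x) + g x \<le> ereal (f y) + g y}. \<theta> \<longlonglongrightarrow> tinf)))"
proof -
  interpret inexact_forward_backward g f df L \<gamma> \<theta> H
  proof unfold_locales
    show "\<gamma> (Suc n) * L \<le> 1" for n
      using step_pos L_pos by (simp add: pos_le_divide_eq)
  qed (use g_notminf g_proper g_convex g_lsc f_grad f_lip f_convex step_pos iter in auto)
  show ?thesis
    by (intro conjI allI impI ballI distance_bound distance_convergent(1) tendsto_minimizer argmin_ne)
       auto
qed

end
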